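(* Let $Y$ be a Peano continuum without cut points. For any point $x\in Y$ and any $\epsilon>0$ there is $\delta>0$ such that $Y\setminus B(x,\epsilon)$ is contained in a single component of $Y\setminus B(x,\delta)$.
   Context: A Peano continuum is a compact, connected, locally connected metric space; $B(x,r)$ denotes the open metric ball of radius $r$ about $x$. *)

theory Defs
  imports "HOL-Analysis.Analysis"
begin

definition peano_continuum :: "'a::metric_space set \<Rightarrow> bool" where
  "peano_continuum Y \<longleftrightarrow> compact Y \<and> connected Y \<and> locally connected Y"

definition cut_point :: "'a::topological_space set \<Rightarrow> 'a \<Rightarrow> bool" where
  "cut_point Y p \<longleftrightarrow> p \<in> Y \<and> \<not> connected (Y - {p})"

end

theory Submission
  imports Defs
begin

text \<open>Removing x leaves Y connected, and by local connectedness the relation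
  ``a and b lie in one component of Y minus some closed ball about x'' has open
  classes in Y - {x}; hence it relates any two points of Y - {x}. The components
  of Y minus the closed balls of radius d about a fixed point of Y - B(x,\<epsilon>) are
  open in Y and grow as d shrinks, and they cover the compact set Y - B(x,\<epsilon>),
  so a single one of them already contains it.\<close>

lemma compactin_subset_of_antimono_open_cover:
  fixes A :: "real \<Rightarrow> 'a set"
  assumes "compactin X K"
    and open_A: "\<And>d. d > 0 \<Longrightarrow> openin X (A d)"
    and antimono_A: "\<And>d e. 0 < d \<Longrightarrow> d \<le> e \<Longrightarrow> A e \<subseteq> A d"
    and cover: "K \<subseteq> (\<Union>d\<in>{0<..}. A d)"
  shows "\<exists>\<delta>>0. K \<subseteq> A \<delta>"
proof -
  obtain \<F> where "finite \<F>" "\<F> \<subseteq> A ` {0<..}" "K \<subseteq> \<Union>\<F>"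
    using compactinD [OF \<open>compactin X K\<close> _ cover] open_A by blast
  then obtain D where D: "finite D" "D \<subseteq> {0<..}" "K \<subseteq> (\<Union>d\<in>D. A d)"
    by (metis finite_subset_image)
  show ?thesis
  proof (cases "D = {}")
    case True
    then show ?thesis using D by (intro exI [of _ 1]) auto
  next
    case False
    have "A d \<subseteq> A (Min D)" if "d \<in> D" for d
      using that D False by (intro antimono_A) auto
    then have "K \<subseteq> A (Min D)"
      using D(3) by blast
    moreover have "Min D > 0"
      using D False by auto
    ultimately show ?thesis by blast
  qed
qed

lemma openin_connected_component_Diff_cball:
  fixes Y :: "'a::metric_space set"
  assumes "locally connected Y"
  shows "openin (top_of_set Y) (connected_component_set (Y - cball x d) a)"
proof (cases "a \<in> Y - cball x d")
  case True
  have "openin (top_of_set Y) (Y - cball x d)"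
    by (metis Diff_eq closed_cball open_Compl openin_open_Int)
  with True \<open>locally connected Y\<close> show ?thesis
    by (simp add: locally_connected_open_connected_component)
next
  case False
  then have "connected_component_set (Y - cball x d) a = {}"
    using connected_component_eq_empty by blast
  then show ?thesis by (metis openin_empty)
qed

lemma connected_component_Diff_cball:
  fixes Y :: "'a::metric_space set"
  assumes "locally connected Y" and "connected (Y - {x})"
    and "a \<in> Y - {x}" and "b \<in> Y - {x}"
  shows "\<exists>d>0. connected_component (Y - cball x d) a b"
  using \<open>connected (Y - {x})\<close> \<open>a \<in> Y - {x}\<close> \<open>b \<in> Y - {x}\<close>
proof (rule connected_equivalence_relation)
  show "\<exists>d>0. connected_component (Y - cball x d) q p"
    if "\<exists>d>0. connected_component (Y - cball x d) p q" for p q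
    using that connected_component_sym by blast
next
  fix p q r
  assume "\<exists>d>0. connected_component (Y - cball x d) p q"
    and "\<exists>e>0. connected_component (Y - cball x e) q r"
  then obtain d e where "d > 0" "e > 0"
    and pq: "connected_component (Y - cball x d) p q"
    and qr: "connected_component (Y - cball x e) q r"
    by blast
  have "Y - cball x d \<subseteq> Y - cball x (min d e)" "Y - cball x e \<subseteq> Y - cball x (min d e)"
    by auto
  then have "connected_component (Y - cball x (min d e)) p r"
    by (meson pq qr connected_component_of_subset connected_component_trans)
  then show "\<exists>d>0. connected_component (Y - cball x d) p r"
    using \<open>d > 0\<close> \<open>e > 0\<close> by (intro exI [of _ "min d e"]) auto
next
  fix p
  assume p: "p \<in> Y - {x}"
  define d where "d = dist p x / 2"
  define T where "T = connected_component_set (Y - cball x d) p"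
  have "d > 0" "p \<in> Y - cball x d"
    using p by (auto simp: d_def dist_commute)
  have "openin (top_of_set Y) T"
    unfolding T_def using \<open>locally connected Y\<close> by (rule openin_connected_component_Diff_cball)
  moreover have "T \<subseteq> Y - {x}"
    using \<open>d > 0\<close> connected_component_subset [of "Y - cball x d" p] by (auto simp: T_def)
  ultimately have "openin (top_of_set (Y - {x})) T"
    by (meson Diff_subset openin_subset_trans)
  moreover have "p \<in> T"
    using \<open>p \<in> Y - cball x d\<close> by (simp add: T_def connected_component_refl)
  moreover have "\<forall>q\<in>T. \<exists>d>0. connected_component (Y - cball x d) p q"
    using \<open>d > 0\<close> by (auto simp: T_def)
  ultimately show "\<exists>T. openin (top_of_set (Y - {x})) T \<and> p \<in> T \<and>
      (\<forall>q\<in>T. \<exists>d>0. connected_component (Y - cball x d) p q)"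
    by blast
qed

lemma compact_subset_connected_component_Diff_cball:
  fixes Y :: "'a::metric_space set"
  assumes "locally connected Y" and "connected (Y - {x})"
    and "compact K" and "K \<subseteq> Y - {x}" and "k \<in> K"
  shows "\<exists>\<delta>>0. K \<subseteq> connected_component_set (Y - cball x \<delta>) k"
proof (rule compactin_subset_of_antimono_open_cover)
  show "compactin (top_of_set Y) K"
    using \<open>compact K\<close> \<open>K \<subseteq> Y - {x}\<close> by (auto simp: compactin_subtopology)
  show "openin (top_of_set Y) (connected_component_set (Y - cball x d) k)" for d
    using \<open>locally connected Y\<close> by (rule openin_connected_component_Diff_cball)
  show "connected_component_set (Y - cball x e) k \<subseteq> connected_component_set (Y - cball x d) k"
    if "d \<le> e" for d e
    using that by (intro connected_component_mono) auto
  show "K \<subseteq> (\<Union>d\<in>{0<..}. connected_component_set (Y - cball x d) k)"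
  proof
    fix y
    assume "y \<in> K"
    then obtain d where "d > 0" "connected_component (Y - cball x d) k y"
      using connected_component_Diff_cball [OF assms(1,2)] assms(4,5) by blast
    then show "y \<in> (\<Union>d\<in>{0<..}. connected_component_set (Y - cball x d) k)"
      by auto
  qed
qed

theorem lemma4p4:
  fixes Y :: "'a::metric_space set" and x :: 'a and \<epsilon> :: real
  assumes "peano_continuum Y"
    and "\<And>p. \<not> cut_point Y p"
    and "x \<in> Y"
    and "\<epsilon> > 0"
  shows "\<exists>\<delta>>0. Y - ball x \<epsilon> = {} \<or>
           (\<exists>C\<in>components (Y - ball x \<delta>). Y - ball x \<epsilon> \<subseteq> C)"
proof (cases "Y - ball x \<epsilon> = {}")
  case True
  then show ?thesis using \<open>\<epsilon> > 0\<close> by blast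
next
  case False
  then obtain k where k: "k \<in> Y - ball x \<epsilon>" by blast
  have "locally connected Y" and "compact (Y - ball x \<epsilon>)"
    using \<open>peano_continuum Y\<close> by (auto simp: peano_continuum_def compact_diff)
  moreover have "connected (Y - {x})"
    using assms(2) [of x] \<open>x \<in> Y\<close> by (simp add: cut_point_def)
  moreover have "Y - ball x \<epsilon> \<subseteq> Y - {x}"
    using \<open>\<epsilon> > 0\<close> by auto
  ultimately obtain \<delta> where "\<delta> > 0"
    and \<delta>: "Y - ball x \<epsilon> \<subseteq> connected_component_set (Y - cball x \<delta>) k"
    using compact_subset_connected_component_Diff_cball k by blast
  then have "connected_component (Y - cball x \<delta>) k k"
    using k by blast
  then have "k \<in> Y - ball x \<delta>"
    using connected_component_in by force
  then have "connected_component_set (Y - ball x \<delta>) k \<in> components (Y - ball x \<delta>)"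
    by (rule componentsI)
  moreover have "connected_component_set (Y - cball x \<delta>) k \<subseteq> connected_component_set (Y - ball x \<delta>) k"
    by (intro connected_component_mono) auto
  ultimately show ?thesis
    using \<open>\<delta> > 0\<close> \<delta> by blast
qed

end
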